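(* Let $\mathcal{C}$ be an $(n,k,d)$ linear MDS code over a finite field $\mathbb{F}_q$, and let $d^\perp = n-d+2$. Then $$\rho(\mathcal{C}) \le \frac{\max\{d^\perp, d-1\}}{n}\binom{n}{d-2}.$$
   Context: An $(n,k,d)$ linear MDS code is a linear code over $\mathbb{F}_q$ of length $n$, dimension $k$ and minimum Hamming distance $d = n-k+1$; its dual is MDS with minimum distance $d^\perp = k+1 = n-d+2$. A parity-check matrix for $\mathcal{C}$ is any matrix (possibly with linearly dependent rows) whose rows span $\mathcal{C}^\perp$. For a parity-check matrix $H$, the stopping distance $s(H)$ is the largest integer such that for every set of $s(H)-1$ or fewer columns of $H$, the projection of $H$ onto those columns contains at least one row with exactly one nonzero entry. The stopping redundancy $\rho(\mathcal{C})$ is the smallest number of rows of a parity-check matrix $H$ for $\mathcal{C}$ with $s(H) = d$. *)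

theory Defs
  imports Complex_Main "HOL-Library.Cardinality"
begin

text \<open>Vectors of length n over a field are functions nat => 'a vanishing outside {..<n}.\<close>

definition vecs :: "nat \<Rightarrow> (nat \<Rightarrow> 'a::field) set" where
  "vecs n = {v. \<forall>i\<ge>n. v i = 0}"

definition linear_code :: "nat \<Rightarrow> (nat \<Rightarrow> 'a::field) set \<Rightarrow> bool" where
  "linear_code n C \<longleftrightarrow> C \<subseteq> vecs n \<and> (\<lambda>i. 0) \<in> C \<and>
     (\<forall>u\<in>C. \<forall>v\<in>C. (\<lambda>i. u i + v i) \<in> C) \<and>
     (\<forall>a. \<forall>u\<in>C. (\<lambda>i. a * u i) \<in> C)"

definition code_dim :: "(nat \<Rightarrow> 'a::{finite,field}) set \<Rightarrow> nat \<Rightarrow> bool" where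
  "code_dim C k \<longleftrightarrow> card C = CARD('a) ^ k"

definition hweight :: "nat \<Rightarrow> (nat \<Rightarrow> 'a::field) \<Rightarrow> nat" where
  "hweight n v = card {i. i < n \<and> v i \<noteq> 0}"

text \<open>Minimum Hamming distance of a linear code = minimum weight of a nonzero codeword.\<close>
definition min_dist :: "nat \<Rightarrow> (nat \<Rightarrow> 'a::field) set \<Rightarrow> nat" where
  "min_dist n C = (LEAST w. \<exists>c\<in>C. c \<noteq> (\<lambda>i. 0) \<and> hweight n c = w)"

definition dual_code :: "nat \<Rightarrow> (nat \<Rightarrow> 'a::field) set \<Rightarrow> (nat \<Rightarrow> 'a) set" where
  "dual_code n C = {v \<in> vecs n. \<forall>c\<in>C. (\<Sum>i<n. v i * c i) = 0}"

definition row_span :: "(nat \<Rightarrow> 'a::field) list \<Rightarrow> (nat \<Rightarrow> 'a) set" where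
  "row_span H = {v. \<exists>a. v = (\<lambda>i. \<Sum>j<length H. a j * (H ! j) i)}"

definition parity_check :: "nat \<Rightarrow> (nat \<Rightarrow> 'a::field) set \<Rightarrow> (nat \<Rightarrow> 'a) list \<Rightarrow> bool" where
  "parity_check n C H \<longleftrightarrow> set H \<subseteq> vecs n \<and> row_span H = dual_code n C"

definition has_single_row :: "(nat \<Rightarrow> 'a::field) list \<Rightarrow> nat set \<Rightarrow> bool" where
  "has_single_row H S \<longleftrightarrow> (\<exists>h\<in>set H. card {i\<in>S. h i \<noteq> 0} = 1)"

definition stopping_distance :: "nat \<Rightarrow> (nat \<Rightarrow> 'a::field) list \<Rightarrow> nat" where
  "stopping_distance n H = (GREATEST s. \<forall>S. S \<subseteq> {..<n} \<and> S \<noteq> {} \<and> card S \<le> s - 1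
       \<longrightarrow> has_single_row H S)"

definition stopping_redundancy :: "nat \<Rightarrow> (nat \<Rightarrow> 'a::field) set \<Rightarrow> nat" where
  "stopping_redundancy n C = (LEAST m. \<exists>H. parity_check n C H \<and> length H = m \<and>
       stopping_distance n H = min_dist n C)"

end

theory Submission
  imports Defs "HOL-Library.FuncSet"
begin

text \<open>In an MDS code any k positions form an information set, so any k + 1 = n - d + 2 positions
  carry a dual codeword: the parity relation expressing one coordinate through the other k.
  Take one such dual word for every (d - 2)-subset Z of the first n - 1 positions, supported off Z.
  Given a nonempty set S of at most d - 1 columns, pick s in S (the last position if it lies
  in S) and enlarge S - {s} to such a Z avoiding s: that row meets S exactly in s. Since no dual
  word meets the support of a codeword exactly once, the stopping distance is d; the rows span
  the dual code, because on d - 1 = n - k columns they can be peeled one column at a time and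
  a dual word vanishing on n - k positions is zero. This gives
  rho \<le> (n - 1 choose d - 2) = (n - d + 2) / n * (n choose d - 2); for d = 1 the dual code is
  trivial and the empty matrix suffices.\<close>

lemma card_functions_supported_on:
  assumes "finite T"
  shows "card {f :: nat \<Rightarrow> 'a::{finite,zero}. \<forall>i. i \<notin> T \<longrightarrow> f i = 0} = CARD('a) ^ card T"
proof -
  let ?V = "{f :: nat \<Rightarrow> 'a. \<forall>i. i \<notin> T \<longrightarrow> f i = 0}"
  have "bij_betw (\<lambda>f. restrict f T) ?V (PiE T (\<lambda>_. UNIV))"
    by (rule bij_betwI[where g = "\<lambda>g i. if i \<in> T then g i else 0"])
      (auto simp: PiE_def extensional_def)
  then have "card ?V = card (PiE T (\<lambda>_. UNIV :: 'a set))"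
    by (rule bij_betw_same_card)
  also have "\<dots> = CARD('a) ^ card T"
    using assms by (simp add: card_PiE)
  finally show ?thesis .
qed

lemma finite_functions_supported_on:
  assumes "finite T"
  shows "finite {f :: nat \<Rightarrow> 'a::{finite,zero}. \<forall>i. i \<notin> T \<longrightarrow> f i = 0}"
  using card_functions_supported_on[OF assms, where 'a = 'a]
  by (intro card_ge_0_finite) simp

text \<open>Position n - 1 is never covered by Z, so when it lies in S it has to be the survivor.\<close>

lemma exists_subset_meeting_in_one:
  fixes S :: "nat set"
  assumes "S \<subseteq> {..<n}" "S \<noteq> {}" "card S \<le> m + 1" "m + 2 \<le> n"
  obtains Z where "Z \<subseteq> {..<n - 1}" "card Z = m" "card (S - Z) = 1"
proof -
  define s where "s = (if n - 1 \<in> S then n - 1 else (SOME s. s \<in> S))"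
  have "s \<in> S"
    using assms(2) by (auto simp: s_def intro: someI_ex)
  have S: "finite S"
    using assms(1) finite_subset by blast
  let ?A = "{..<n - 1} - {s}"
  have "S - {s} \<subseteq> ?A"
  proof
    fix i assume i: "i \<in> S - {s}"
    then have "i < n" "i \<noteq> n - 1"
      using assms(1) by (auto simp: s_def split: if_splits)
    then show "i \<in> ?A"
      using i by auto
  qed
  moreover have "card (S - {s}) \<le> m"
    using assms(3) S \<open>s \<in> S\<close> by simp
  moreover have "m \<le> card ?A"
    using assms(4) by (auto simp: card_Diff_singleton_if)
  ultimately obtain Z where Z: "S - {s} \<subseteq> Z" "Z \<subseteq> ?A" "card Z = m"
    using exists_subset_between[of "S - {s}" m ?A] by blast
  then have "S - Z = {s}"
    using \<open>s \<in> S\<close> by blast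
  show ?thesis
    by (rule that) (use Z \<open>S - Z = {s}\<close> in auto)
qed

lemma real_binomial_absorb_comp:
  assumes "0 < n"
  shows "real ((n - 1) choose m) = real (n - m) / real n * real (n choose m)"
proof -
  have "real (n - m) * real (n choose m) = real n * real ((n - 1) choose m)"
    using binomial_absorb_comp[of n m] by (metis of_nat_mult)
  then show ?thesis
    using assms by (simp add: field_simps)
qed

section \<open>Linear codes\<close>

lemma linear_code_add: "linear_code n C \<Longrightarrow> u \<in> C \<Longrightarrow> v \<in> C \<Longrightarrow> (\<lambda>i. u i + v i) \<in> C"
  unfolding linear_code_def by blast

lemma linear_code_smult: "linear_code n C \<Longrightarrow> u \<in> C \<Longrightarrow> (\<lambda>i. a * u i) \<in> C"
  unfolding linear_code_def by blast

lemma linear_code_diff: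
  assumes "linear_code n C" "u \<in> C" "v \<in> C"
  shows "(\<lambda>i. u i - v i) \<in> C"
  using linear_code_add[OF assms(1,2) linear_code_smult[OF assms(1,3), of "-1"]] by simp

lemma linear_code_sum:
  assumes "linear_code n C" "finite J" "\<And>j. j \<in> J \<Longrightarrow> f j \<in> C"
  shows "(\<lambda>i. \<Sum>j\<in>J. a j * f j i) \<in> C"
  using assms(2,3)
proof (induction J rule: finite_induct)
  case empty
  then show ?case using assms(1) by (simp add: linear_code_def)
next
  case (insert x F)
  then show ?case
    using linear_code_add[OF assms(1) linear_code_smult[OF assms(1)]] by simp
qed

lemma code_dim_le_length:
  fixes C :: "(nat \<Rightarrow> 'a::{finite,field}) set"
  assumes "linear_code n C" "code_dim C k"
  shows "k \<le> n"
proof -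
  let ?V = "{f :: nat \<Rightarrow> 'a. \<forall>i. i \<notin> {..<n} \<longrightarrow> f i = 0}"
  have "C \<subseteq> ?V"
    using assms(1) by (auto simp: linear_code_def vecs_def)
  then have "card C \<le> card ?V"
    by (intro card_mono finite_functions_supported_on) auto
  then have "CARD('a) ^ k \<le> CARD('a) ^ n"
    using assms(2) card_functions_supported_on[of "{..<n}", where 'a = 'a]
    by (simp add: code_dim_def)
  moreover have "card {0::'a, 1} \<le> CARD('a)"
    by (rule card_mono) auto
  ultimately show ?thesis
    using power_le_imp_le_exp by fastforce
qed

lemma min_dist_le_hweight:
  assumes "c \<in> C" "c \<noteq> (\<lambda>i. 0)"
  shows "min_dist n C \<le> hweight n c"
  unfolding min_dist_def by (rule Least_le) (use assms in blast)

lemma exists_codeword_of_min_dist: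
  assumes "\<exists>c\<in>C. c \<noteq> (\<lambda>i. 0)"
  obtains c where "c \<in> C" "c \<noteq> (\<lambda>i. 0)" "hweight n c = min_dist n C"
proof -
  have "\<exists>w. \<exists>c\<in>C. c \<noteq> (\<lambda>i. 0) \<and> hweight n c = w"
    using assms by blast
  then have "\<exists>c\<in>C. c \<noteq> (\<lambda>i. 0) \<and> hweight n c = min_dist n C"
    unfolding min_dist_def by (rule LeastI_ex)
  then show ?thesis using that by blast
qed

section \<open>Parity-check matrices\<close>

lemma row_span_subset_dual_code:
  assumes "set H \<subseteq> dual_code n C"
  shows "row_span H \<subseteq> dual_code n C"
proof
  fix r assume "r \<in> row_span H"
  then obtain a where r: "r = (\<lambda>i. \<Sum>j<length H. a j * (H ! j) i)"
    unfolding row_span_def by blast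
  have Hj: "H ! j \<in> dual_code n C" if "j < length H" for j
    using assms that by auto
  show "r \<in> dual_code n C"
    unfolding dual_code_def
  proof (intro CollectI conjI ballI)
    have "(H ! j) i = 0" if "j < length H" "n \<le> i" for i j
      using Hj[OF that(1)] that(2) by (simp add: dual_code_def vecs_def)
    then show "r \<in> vecs n"
      by (simp add: r vecs_def)
    fix c assume "c \<in> C"
    have "(\<Sum>i<n. r i * c i) = (\<Sum>i<n. \<Sum>j<length H. a j * ((H ! j) i * c i))"
      by (simp add: r sum_distrib_right mult.assoc)
    also have "\<dots> = (\<Sum>j<length H. a j * (\<Sum>i<n. (H ! j) i * c i))"
      by (subst sum.swap) (simp add: sum_distrib_left)
    also have "\<dots> = 0"
      using Hj \<open>c \<in> C\<close> by (simp add: dual_code_def)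
    finally show "(\<Sum>i<n. r i * c i) = 0" .
  qed
qed

lemma dual_code_diff:
  assumes "u \<in> dual_code n C" "v \<in> dual_code n C"
  shows "(\<lambda>i. u i - v i) \<in> dual_code n C"
  using assms by (simp add: dual_code_def vecs_def left_diff_distrib sum_subtractf)

text \<open>Peeling: a row with a single nonzero entry on S, at s, fixes the value at s without
  disturbing the other positions of S, which are handled by induction.\<close>

lemma row_combination_interpolates:
  assumes "finite S" "\<And>S'. S' \<subseteq> S \<Longrightarrow> S' \<noteq> {} \<Longrightarrow> has_single_row H S'"
  shows "\<exists>a. \<forall>i\<in>S. (\<Sum>j<length H. a j * (H ! j) i) = (x i :: 'a::field)"
  using assms(1,2)
proof (induction S rule: finite_psubset_induct)
  case (psubset S)
  show ?case
  proof (cases "S = {}")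
    case False
    then obtain h where h: "h \<in> set H" "card {i\<in>S. h i \<noteq> 0} = 1"
      using psubset.prems unfolding has_single_row_def by blast
    then obtain s where s: "{i\<in>S. h i \<noteq> 0} = {s}"
      using card_1_singletonE by blast
    obtain j0 where j0: "j0 < length H" "H ! j0 = h"
      using h(1) by (metis in_set_conv_nth)
    have "S - {s} \<subset> S"
      using s by auto
    moreover have "has_single_row H S'" if "S' \<subseteq> S - {s}" "S' \<noteq> {}" for S'
      by (rule psubset.prems) (use that in auto)
    ultimately have "\<exists>a. \<forall>i\<in>S - {s}. (\<Sum>j<length H. a j * (H ! j) i) = x i"
      by (rule psubset.IH)
    then obtain a where a: "\<forall>i\<in>S - {s}. (\<Sum>j<length H. a j * (H ! j) i) = x i"
      by blast
    define t where "t = (x s - (\<Sum>j<length H. a j * (H ! j) s)) / h s"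
    define a' where "a' = (\<lambda>j. a j + (if j = j0 then t else 0))"
    have a': "(\<Sum>j<length H. a' j * (H ! j) i) = (\<Sum>j<length H. a j * (H ! j) i) + t * h i" for i
    proof -
      have "(\<Sum>j<length H. a' j * (H ! j) i)
          = (\<Sum>j<length H. a j * (H ! j) i + (if j = j0 then t * (H ! j) i else 0))"
        by (rule sum.cong) (auto simp: a'_def distrib_right)
      then show ?thesis
        using j0 by (simp add: sum.distrib)
    qed
    have "(\<Sum>j<length H. a' j * (H ! j) i) = x i" if "i \<in> S" for i
    proof (cases "i = s")
      case True
      then have "h i \<noteq> 0"
        using s by blast
      then show ?thesis
        using True by (simp add: a' t_def)
    next
      case False
      then have "h i = 0"
        using s \<open>i \<in> S\<close> by blast
      then show ?thesis
        using a \<open>i \<in> S\<close> False by (simp add: a')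
    qed
    then show ?thesis by blast
  qed simp
qed

lemma dual_code_not_single_on_support:
  assumes "h \<in> dual_code n C" "c \<in> C"
  shows "card {i \<in> {i. i < n \<and> c i \<noteq> 0}. h i \<noteq> 0} \<noteq> 1"
proof
  assume "card {i \<in> {i. i < n \<and> c i \<noteq> 0}. h i \<noteq> 0} = 1"
  then obtain s where s: "{i \<in> {i. i < n \<and> c i \<noteq> 0}. h i \<noteq> 0} = {s}"
    using card_1_singletonE by blast
  have "(\<Sum>i<n. h i * c i) = (\<Sum>i\<in>{s}. h i * c i)"
    using s by (intro sum.mono_neutral_right) auto
  also have "\<dots> \<noteq> 0"
    using s by auto
  finally show False
    using assms by (simp add: dual_code_def)
qed

lemma stopping_distance_eqI:
  assumes "linear_code n C" "set H \<subseteq> dual_code n C" "\<exists>c\<in>C. c \<noteq> (\<lambda>i. 0)"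
    and single: "\<And>S. S \<subseteq> {..<n} \<Longrightarrow> S \<noteq> {} \<Longrightarrow> card S \<le> min_dist n C - 1 \<Longrightarrow> has_single_row H S"
  shows "stopping_distance n H = min_dist n C"
  unfolding stopping_distance_def
proof (rule Greatest_equality)
  fix s
  assume s: "\<forall>S. S \<subseteq> {..<n} \<and> S \<noteq> {} \<and> card S \<le> s - 1 \<longrightarrow> has_single_row H S"
  obtain c where c: "c \<in> C" "c \<noteq> (\<lambda>i. 0)" "hweight n c = min_dist n C"
    using exists_codeword_of_min_dist[OF assms(3)] by blast
  let ?S = "{i. i < n \<and> c i \<noteq> 0}"
  obtain i where "c i \<noteq> 0"
    using c(2) by auto
  moreover have "c \<in> vecs n"
    using c(1) assms(1) by (auto simp: linear_code_def)
  ultimately have "?S \<noteq> {}"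
    by (auto simp: vecs_def not_le[symmetric])
  show "s \<le> min_dist n C"
  proof (rule ccontr)
    assume "\<not> s \<le> min_dist n C"
    then have "card ?S \<le> s - 1"
      using c(3) by (simp add: hweight_def)
    then have "has_single_row H ?S"
      using \<open>?S \<noteq> {}\<close> by (intro s[rule_format]) auto
    then obtain h where "h \<in> set H" "card {i \<in> ?S. h i \<noteq> 0} = 1"
      unfolding has_single_row_def by blast
    then show False
      using dual_code_not_single_on_support[OF _ c(1)] assms(2) by blast
  qed
qed (auto intro: single)

lemma stopping_redundancy_le_length:
  assumes "set H \<subseteq> dual_code n C" "row_span H = dual_code n C"
    and "stopping_distance n H = min_dist n C"
  shows "stopping_redundancy n C \<le> length H"
proof -
  have "parity_check n C H"
    using assms(1,2) by (auto simp: parity_check_def dual_code_def)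
  show ?thesis
    unfolding stopping_redundancy_def
    by (rule Least_le) (use \<open>parity_check n C H\<close> assms(3) in auto)
qed

section \<open>MDS codes\<close>

locale mds_code =
  fixes n k :: nat and C :: "(nat \<Rightarrow> 'a::{finite,field}) set"
  assumes linear: "linear_code n C" and dim: "code_dim C k"
    and min_dist: "min_dist n C = n - k + 1" and dim_le_length: "k \<le> n"
begin

lemma eq_zero_if_vanishes_on:
  assumes "c \<in> C" "K \<subseteq> {..<n}" "k \<le> card K" "\<forall>i\<in>K. c i = 0"
  shows "c = (\<lambda>i. 0)"
proof (rule ccontr)
  assume "c \<noteq> (\<lambda>i. 0)"
  then have "n - k + 1 \<le> hweight n c"
    using min_dist_le_hweight[OF assms(1), where n = n] min_dist by simp
  also have "\<dots> \<le> card ({..<n} - K)"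
    unfolding hweight_def by (rule card_mono) (use assms(4) in auto)
  also have "\<dots> = n - card K"
    using assms(2) by (simp add: card_Diff_subset finite_subset)
  finally show False
    using assms(3) by linarith
qed

lemma eq_if_agree_on:
  assumes "u \<in> C" "v \<in> C" "K \<subseteq> {..<n}" "k \<le> card K" "\<forall>i\<in>K. u i = v i"
  shows "u = v"
proof -
  have "(\<lambda>i. u i - v i) = (\<lambda>i. 0)"
    using eq_zero_if_vanishes_on[OF linear_code_diff[OF linear assms(1,2)] assms(3,4)] assms(5)
    by simp
  then show ?thesis
    by (simp add: fun_eq_iff)
qed

text \<open>Every set of k positions is an information set: restriction to it is injective on C
  by the lemma above, hence bijective onto all words supported there by counting.\<close>

lemma exists_codeword_interpolating:
  assumes "K \<subseteq> {..<n}" "card K = k"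
  shows "\<exists>c\<in>C. \<forall>i\<in>K. c i = x i"
proof -
  let ?V = "{f :: nat \<Rightarrow> 'a. \<forall>i. i \<notin> K \<longrightarrow> f i = 0}"
  define p where "p c = (\<lambda>i. if i \<in> K then c i else 0)" for c :: "nat \<Rightarrow> 'a"
  have K: "finite K"
    using assms(1) finite_subset by blast
  have agree: "\<forall>i\<in>K. u i = w i" if "p u = p w" for u w
  proof
    fix i assume "i \<in> K"
    then show "u i = w i"
      using fun_cong[OF that, of i] by (simp add: p_def)
  qed
  have "inj_on p C"
    using eq_if_agree_on[OF _ _ assms(1)] assms(2) agree by (intro inj_onI) simp
  then have "card (p ` C) = card ?V"
    using dim card_functions_supported_on[OF K, where 'a = 'a] assms(2)
    by (simp add: card_image code_dim_def)
  moreover have "p ` C \<subseteq> ?V"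
    by (auto simp: p_def)
  ultimately have "p ` C = ?V"
    using card_subset_eq[OF finite_functions_supported_on[OF K]] by blast
  moreover have "p x \<in> ?V"
    by (simp add: p_def)
  ultimately have "p x \<in> p ` C"
    by simp
  then obtain c where "c \<in> C" "p c = p x"
    by force
  then show ?thesis
    using agree[of c x] by blast
qed

lemma obtain_unit_codewords:
  assumes "K \<subseteq> {..<n}" "card K = k"
  obtains e where "\<And>i. e i \<in> C" "\<And>i l. l \<in> K \<Longrightarrow> e i l = (if l = i then 1 else 0)"
proof -
  have "\<exists>c\<in>C. \<forall>l\<in>K. c l = (if l = i then 1 else 0)" for i
    using exists_codeword_interpolating[OF assms, of "\<lambda>l. if l = i then 1 else 0"] by simp
  then obtain e where "\<forall>i. e i \<in> C \<and> (\<forall>l\<in>K. e i l = (if l = i then 1 else 0))"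
    by metis
  then show ?thesis
    using that by blast
qed

lemma codeword_expansion:
  assumes "K \<subseteq> {..<n}" "card K = k"
    and e: "\<And>i. e i \<in> C" "\<And>i l. l \<in> K \<Longrightarrow> e i l = (if l = i then 1 else 0)"
    and "c \<in> C"
  shows "c = (\<lambda>j. \<Sum>l\<in>K. c l * e l j)"
proof (rule eq_if_agree_on[OF assms(5) _ assms(1)])
  have K: "finite K"
    using assms(1) finite_subset by blast
  show "(\<lambda>j. \<Sum>l\<in>K. c l * e l j) \<in> C"
    by (rule linear_code_sum[OF linear K e(1)])
  show "\<forall>i\<in>K. c i = (\<Sum>l\<in>K. c l * e l i)"
    using K by (simp add: e(2) if_distrib sum.delta cong: if_cong)
qed (use assms(2) in simp)

lemma unit_codeword_nonzero_off:
  assumes "K \<subseteq> {..<n}" "card K = k"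
    and e: "e \<in> C" "\<And>l. l \<in> K \<Longrightarrow> e l = (if l = i then 1 else 0)"
    and "i \<in> K" "j < n" "j \<notin> K"
  shows "e j \<noteq> 0"
proof
  assume "e j = 0"
  let ?K' = "insert j (K - {i})"
  have K: "finite K"
    using assms(1) finite_subset by blast
  have "card K \<noteq> 0"
    using K \<open>i \<in> K\<close> by auto
  then have "?K' \<subseteq> {..<n}" "card ?K' = k"
    using assms K by (auto simp: card_insert_if)
  moreover have "\<forall>l\<in>?K'. e l = 0"
    using \<open>e j = 0\<close> e(2) by auto
  ultimately have "e = (\<lambda>l. 0)"
    by (intro eq_zero_if_vanishes_on[OF e(1), of ?K']) auto
  then show False
    using e(2)[OF \<open>i \<in> K\<close>] by simp
qed

text \<open>With K = T - {j}, the dual word is the parity relation c j = (\<Sum>l\<in>K. e l j * c l)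
  given by the expansion above; its coefficients are nonzero by the previous lemma.\<close>

lemma obtain_dual_codeword_with_support:
  assumes "T \<subseteq> {..<n}" "card T = k + 1"
  obtains h where "h \<in> dual_code n C" "\<And>i. h i \<noteq> 0 \<longleftrightarrow> i \<in> T"
proof -
  obtain j where "j \<in> T"
    using assms(2) by fastforce
  define K where "K = T - {j}"
  have T: "finite T" "T = insert j K" "j \<notin> K" "j < n"
    using assms finite_subset \<open>j \<in> T\<close> by (auto simp: K_def)
  have K: "K \<subseteq> {..<n}" "card K = k"
    using assms \<open>j \<in> T\<close> T(1) by (auto simp: K_def)
  obtain e where e: "\<And>i. e i \<in> C" "\<And>i l. l \<in> K \<Longrightarrow> e i l = (if l = i then 1 else 0)"
    using obtain_unit_codewords[OF K] by blast
  define h where "h l = (if l = j then 1 else if l \<in> K then - e l j else 0)" for l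
  have support: "h i \<noteq> 0 \<longleftrightarrow> i \<in> T" for i
  proof (cases "i \<in> K")
    case True
    then show ?thesis
      using unit_codeword_nonzero_off[OF K e(1) e(2) True T(4,3)] T(2,3) by (auto simp: h_def)
  qed (use T(2) in \<open>auto simp: h_def\<close>)
  have "h \<in> dual_code n C"
    unfolding dual_code_def
  proof (intro CollectI conjI ballI)
    show "h \<in> vecs n"
      unfolding vecs_def
    proof (intro CollectI allI impI)
      fix i assume "n \<le> i"
      then have "i \<notin> T"
        using assms(1) by auto
      then show "h i = 0"
        using support[of i] by simp
    qed
    fix c assume "c \<in> C"
    have "(\<Sum>i\<in>K. h i * c i) = - (\<Sum>l\<in>K. c l * e l j)"
      unfolding sum_negf[symmetric] by (rule sum.cong) (use T(3) in \<open>auto simp: h_def\<close>)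
    have "(\<Sum>i<n. h i * c i) = (\<Sum>i\<in>T. h i * c i)"
      by (rule sum.mono_neutral_right) (use support assms(1) in auto)
    also have "\<dots> = h j * c j + (\<Sum>i\<in>K. h i * c i)"
      using T(1-3) by simp
    also have "\<dots> = c j - (\<Sum>l\<in>K. c l * e l j)"
      using \<open>(\<Sum>i\<in>K. h i * c i) = - (\<Sum>l\<in>K. c l * e l j)\<close> by (simp add: h_def)
    also have "\<dots> = 0"
      using fun_cong[OF codeword_expansion[OF K e \<open>c \<in> C\<close>], of j] by simp
    finally show "(\<Sum>i<n. h i * c i) = 0" .
  qed
  then show ?thesis
    using that support by simp
qed

lemma dual_eq_zero_if_vanishes_on:
  assumes "v \<in> dual_code n C" "U \<subseteq> {..<n}" "card U = n - k" "\<forall>i\<in>U. v i = 0"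
  shows "v = (\<lambda>i. 0)"
proof
  fix i
  show "v i = 0"
  proof (cases "i < n \<and> i \<notin> U")
    case False
    then show ?thesis
      using assms(1,4) by (auto simp: dual_code_def vecs_def)
  next
    case True
    let ?K = "{..<n} - U"
    have "card ?K = k"
      using assms(2,3) dim_le_length by (simp add: card_Diff_subset finite_subset)
    then obtain c where c: "c \<in> C" "\<forall>l\<in>?K. c l = (if l = i then 1 else 0)"
      using exists_codeword_interpolating[of ?K "\<lambda>l. if l = i then 1 else 0"] by blast
    have "0 = (\<Sum>l<n. v l * c l)"
      using assms(1) c(1) by (simp add: dual_code_def)
    also have "\<dots> = (\<Sum>l\<in>{i}. v l * c l)"
      using True c(2) assms(4) by (intro sum.mono_neutral_right) auto
    also have "\<dots> = v i"
      using True c(2) by simp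
    finally show ?thesis by simp
  qed
qed

lemma row_span_eq_dual_code:
  assumes H: "set H \<subseteq> dual_code n C"
    and U: "U \<subseteq> {..<n}" "card U = n - k"
    and single: "\<And>S. S \<subseteq> U \<Longrightarrow> S \<noteq> {} \<Longrightarrow> has_single_row H S"
  shows "row_span H = dual_code n C"
proof
  show "row_span H \<subseteq> dual_code n C"
    by (rule row_span_subset_dual_code[OF H])
  show "dual_code n C \<subseteq> row_span H"
  proof
    fix v assume v: "v \<in> dual_code n C"
    have "finite U"
      using U(1) finite_subset by blast
    then obtain a where a: "\<forall>i\<in>U. (\<Sum>j<length H. a j * (H ! j) i) = v i"
      using row_combination_interpolates[OF _ single] by blast
    define r where "r i = (\<Sum>j<length H. a j * (H ! j) i)" for i
    have r: "r \<in> row_span H"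
      unfolding r_def row_span_def by blast
    have "(\<lambda>i. v i - r i) \<in> dual_code n C"
      using dual_code_diff v row_span_subset_dual_code[OF H] r by blast
    moreover have "\<forall>i\<in>U. v i - r i = 0"
      using a by (simp add: r_def)
    ultimately have "(\<lambda>i. v i - r i) = (\<lambda>i. 0)"
      using dual_eq_zero_if_vanishes_on U by blast
    then have "v = r"
      by (simp add: fun_eq_iff)
    then show "v \<in> row_span H"
      using r by simp
  qed
qed

lemma stopping_redundancy_eq_0_if_dim_eq_length:
  assumes "k = n" "\<exists>c\<in>C. c \<noteq> (\<lambda>i. 0)"
  shows "stopping_redundancy n C = 0"
proof -
  have "row_span [] = dual_code n C"
    by (rule row_span_eq_dual_code[of "[]" "{}"]) (use assms(1) in auto)
  moreover have "stopping_distance n ([] :: (nat \<Rightarrow> 'a) list) = min_dist n C"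
    by (rule stopping_distance_eqI[OF linear _ assms(2)])
      (use assms(1) min_dist in \<open>auto dest: finite_subset\<close>)
  ultimately show ?thesis
    using stopping_redundancy_le_length[of "[]"] by simp
qed

lemma stopping_redundancy_le_binomial:
  assumes "k < n" "\<exists>c\<in>C. c \<noteq> (\<lambda>i. 0)"
  shows "stopping_redundancy n C \<le> (n - 1) choose (n - k - 1)"
proof -
  define m where "m = n - k - 1"
  have "k \<noteq> 0"
    using assms(2) eq_zero_if_vanishes_on[of _ "{}"] by auto
  then have m: "m + 2 \<le> n" "n - k = m + 1" "n - m = k + 1"
    using assms(1) by (auto simp: m_def)
  define F where "F = {Z. Z \<subseteq> {..<n - 1} \<and> card Z = m}"
  have "\<exists>h. h \<in> dual_code n C \<and> (\<forall>i. h i \<noteq> 0 \<longleftrightarrow> i \<in> {..<n} - Z)" if "Z \<in> F" for Z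
  proof -
    have "Z \<subseteq> {..<n}" "card Z = m"
      using that by (auto simp: F_def)
    then have "card ({..<n} - Z) = k + 1"
      using m(3) by (simp add: card_Diff_subset finite_subset)
    then show ?thesis
      using obtain_dual_codeword_with_support[of "{..<n} - Z"] by blast
  qed
  then obtain row where row: "\<And>Z. Z \<in> F \<Longrightarrow> row Z \<in> dual_code n C"
    "\<And>Z i. Z \<in> F \<Longrightarrow> row Z i \<noteq> 0 \<longleftrightarrow> i \<in> {..<n} - Z"
    by metis
  have "finite F"
    unfolding F_def by (rule finite_subset[of _ "Pow {..<n - 1}"]) auto
  then obtain Zs where Zs: "set Zs = F" "distinct Zs"
    using finite_distinct_list by blast
  define H where "H = map row Zs"
  have H: "set H \<subseteq> dual_code n C"
    using row(1) Zs(1) by (auto simp: H_def)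
  have single: "has_single_row H S"
    if S: "S \<subseteq> {..<n}" "S \<noteq> {}" "card S \<le> m + 1" for S
  proof -
    obtain Z where Z: "Z \<subseteq> {..<n - 1}" "card Z = m" "card (S - Z) = 1"
      using exists_subset_meeting_in_one[OF S m(1)] by blast
    then have "Z \<in> F"
      by (simp add: F_def)
    then have "row Z \<in> set H" "{i \<in> S. row Z i \<noteq> 0} = S - Z"
      using Zs(1) row(2) S(1) by (auto simp: H_def)
    then show ?thesis
      unfolding has_single_row_def using Z(3) by metis
  qed
  have "row_span H = dual_code n C"
  proof (rule row_span_eq_dual_code[OF H, of "{..<n - k}"])
    fix S assume "S \<subseteq> {..<n - k}" "S \<noteq> {}"
    moreover from this have "card S \<le> m + 1"
      using m(2) by (metis card_lessThan card_mono finite_lessThan)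
    moreover have "S \<subseteq> {..<n}"
      using \<open>S \<subseteq> {..<n - k}\<close> by auto
    ultimately show "has_single_row H S"
      using single by blast
  qed auto
  moreover have "stopping_distance n H = min_dist n C"
    using single min_dist m(2) by (intro stopping_distance_eqI[OF linear H assms(2)]) auto
  ultimately have "stopping_redundancy n C \<le> length H"
    by (rule stopping_redundancy_le_length[OF H])
  also have "length H = (n - 1) choose m"
    using Zs by (simp add: H_def F_def distinct_card[symmetric] n_subsets)
  finally show ?thesis
    by (simp add: m_def)
qed

end

theorem corollary20:
  fixes C :: "(nat \<Rightarrow> 'a::{finite,field}) set" and n k d :: nat
  assumes "linear_code n C"
    and "code_dim C k"
    and "\<exists>c\<in>C. c \<noteq> (\<lambda>i. 0)"
    and "min_dist n C = d"
    and "d = n - k + 1"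
  shows "real (stopping_redundancy n C)
     \<le> real (max (n - d + 2) (d - 1)) / real n * real (if 2 \<le> d then n choose (d - 2) else 0)"
proof -
  interpret mds_code n k C
    using assms code_dim_le_length by unfold_locales auto
  show ?thesis
  proof (cases "2 \<le> d")
    case True
    then have "k < n" "n - k - 1 = d - 2"
      using assms(5) by auto
    then have "real (stopping_redundancy n C) \<le> real ((n - 1) choose (d - 2))"
      using stopping_redundancy_le_binomial[OF _ assms(3)] by simp
    also have "\<dots> = real (n - (d - 2)) / real n * real (n choose (d - 2))"
      using \<open>k < n\<close> by (intro real_binomial_absorb_comp) simp
    also have "\<dots> \<le> real (max (n - d + 2) (d - 1)) / real n * real (n choose (d - 2))"
      by (intro mult_right_mono divide_right_mono) auto
    finally show ?thesis
      using True by simp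
  next
    case False
    then have "k = n"
      using assms(5) dim_le_length by simp
    then show ?thesis
      using stopping_redundancy_eq_0_if_dim_eq_length[OF _ assms(3)] by simp
  qed
qed

end
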